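(* Let $M$ be a countable $\aleph_0$-categorical structure with no algebraicity that admits weak elimination of imaginaries. Then for all $A,B\subseteq M$, $$\mathrm{acl}^{eq}A\cap \mathrm{acl}^{eq}B=\mathrm{dcl}^{eq}(A\cap B).$$
   Context: $G=\operatorname{Aut}(M)$; for finite $A$, $G_A$ is the pointwise stabilizer. $M^{eq}$ is the disjoint union of $M^k/E$ over all $k$ and all $G$-invariant equivalence relations $E$ on $M^k$, with $M\subseteq M^{eq}$ via equality on $M^1$. For finite $A\subseteq M^{eq}$: $\mathrm{acl}^{eq}A=\{e: G_A\cdot e \text{ finite}\}$, $\mathrm{dcl}^{eq}A=\{e: G_A\cdot e=\{e\}\}$; for infinite $A$ take the union over finite subsets. No algebraicity: for every finite $A\subseteq M$, all $G_A$-orbits on $M\setminus A$ are infinite. Weak elimination of imaginaries: for every $e\in M^{eq}$ there is a real tuple $\bar a$ with $e\in\mathrm{dcl}^{eq}\bar a$ and $\bar a\in\mathrm{acl}^{eq}e$. *)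

theory Defs
  imports Main "HOL-Library.Countable"
begin

text \<open>A relational structure with universe UNIV of type 'a, signature 'r,
  arities ar and interpretations R.  Its automorphism group:\<close>

definition Aut :: "('r \<Rightarrow> nat) \<Rightarrow> ('r \<Rightarrow> 'a list set) \<Rightarrow> ('a \<Rightarrow> 'a) set" where
  "Aut ar R = {g. bij g \<and> (\<forall>r xs. length xs = ar r \<longrightarrow> (xs \<in> R r \<longleftrightarrow> map g xs \<in> R r))}"

text \<open>Oligomorphic group: finitely many G-orbits on n-tuples for every n
  (Ryll-Nardzewski characterisation of aleph_0-categoricity of a countable structure).\<close>

definition oligomorphic :: "('a \<Rightarrow> 'a) set \<Rightarrow> bool" where
  "oligomorphic G \<longleftrightarrow>
     (\<forall>n. finite ((\<lambda>xs. (\<lambda>g. map g xs) ` G) ` {xs. length xs = n}))"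

definition inv_eqrel :: "('a \<Rightarrow> 'a) set \<Rightarrow> nat \<Rightarrow> ('a list \<times> 'a list) set \<Rightarrow> bool" where
  "inv_eqrel G k E \<longleftrightarrow> equiv {xs. length xs = k} E \<and>
     (\<forall>g\<in>G. \<forall>xs ys. (xs, ys) \<in> E \<longrightarrow> (map g xs, map g ys) \<in> E)"

text \<open>Elements of M^eq: triples (k, E, C) with C an E-class of M^k.\<close>

type_synonym 'a imag = "nat \<times> ('a list \<times> 'a list) set \<times> 'a list set"

definition Meq :: "('a \<Rightarrow> 'a) set \<Rightarrow> 'a imag set" where
  "Meq G = {(k, E, C). inv_eqrel G k E \<and> C \<in> {xs. length xs = k} // E}"

definition act :: "('a \<Rightarrow> 'a) \<Rightarrow> 'a imag \<Rightarrow> 'a imag" where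
  "act g e = (case e of (k, E, C) \<Rightarrow> (k, E, map g ` C))"

definition real_el :: "'a \<Rightarrow> 'a imag" where
  "real_el a = (1, Id_on {xs. length xs = 1}, {[a]})"

definition stab :: "('a \<Rightarrow> 'a) set \<Rightarrow> 'a imag set \<Rightarrow> ('a \<Rightarrow> 'a) set" where
  "stab G X = {g\<in>G. \<forall>x\<in>X. act g x = x}"

text \<open>acl^eq and dcl^eq; for infinite X this is the union over finite subsets,
  which for finite X agrees with the direct definition.\<close>

definition acl_eq :: "('a \<Rightarrow> 'a) set \<Rightarrow> 'a imag set \<Rightarrow> 'a imag set" where
  "acl_eq G X = {e\<in>Meq G. \<exists>F. F \<subseteq> X \<and> finite F \<and> finite ((\<lambda>g. act g e) ` stab G F)}"

definition dcl_eq :: "('a \<Rightarrow> 'a) set \<Rightarrow> 'a imag set \<Rightarrow> 'a imag set" where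
  "dcl_eq G X = {e\<in>Meq G. \<exists>F. F \<subseteq> X \<and> finite F \<and> (\<lambda>g. act g e) ` stab G F = {e}}"

definition no_algebraicity :: "('a \<Rightarrow> 'a) set \<Rightarrow> bool" where
  "no_algebraicity G \<longleftrightarrow>
     (\<forall>A b. finite A \<and> b \<notin> A \<longrightarrow>
        infinite ((\<lambda>g. g b) ` stab G (real_el ` A)))"

definition weak_EI :: "('a \<Rightarrow> 'a) set \<Rightarrow> bool" where
  "weak_EI G \<longleftrightarrow>
     (\<forall>e\<in>Meq G. \<exists>as. e \<in> dcl_eq G (real_el ` set as) \<and> real_el ` set as \<subseteq> acl_eq G {e})"

end

theory Submission
  imports Defs
begin

text \<open>The inclusion from right to left holds in any structure. For the other one, let e lie in
  both algebraic closures. Weak elimination of imaginaries codes e by a real tuple that is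
  algebraic over e; by transitivity of algebraic closure this tuple is algebraic over A and over B,
  and without algebraicity a real element algebraic over a set of reals belongs to it. So the code
  lies in A \<inter> B, and e, being definable over the code, lies in dcl(A \<inter> B).\<close>

lemma act_comp: "act (f \<circ> g) e = act f (act g e)"
  by (cases e) (auto simp: act_def image_image)

lemma act_id: "act id e = e"
  by (cases e) (auto simp: act_def)

lemma act_inv_act: "bij g \<Longrightarrow> act (inv g) (act g e) = e"
  by (metis act_comp act_id bij_is_inj inv_o_cancel)

lemma act_real_el: "act g (real_el a) = real_el (g a)"
  by (simp add: act_def real_el_def)

lemma inj_real_el: "inj real_el"
  by (auto simp: inj_def real_el_def)

lemma Aut_bij: "g \<in> Aut ar R \<Longrightarrow> bij g"
  by (simp add: Aut_def)

lemma Aut_preserves: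
  "g \<in> Aut ar R \<Longrightarrow> length xs = ar r \<Longrightarrow> map g xs \<in> R r \<longleftrightarrow> xs \<in> R r"
  unfolding Aut_def by blast

lemma AutI:
  "bij g \<Longrightarrow> (\<And>r xs. length xs = ar r \<Longrightarrow> map g xs \<in> R r \<longleftrightarrow> xs \<in> R r) \<Longrightarrow> g \<in> Aut ar R"
  unfolding Aut_def by blast

lemma inv_in_Aut:
  assumes "g \<in> Aut ar R"
  shows "inv g \<in> Aut ar R"
proof (rule AutI)
  have "bij g"
    using assms by (rule Aut_bij)
  then show "bij (inv g)"
    by (rule bij_imp_bij_inv)
  fix r and xs :: "'a list" assume "length xs = ar r"
  moreover have "map g (map (inv g) xs) = xs"
    using \<open>bij g\<close> by (simp add: bij_is_surj surj_f_inv_f map_idI)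
  ultimately show "map (inv g) xs \<in> R r \<longleftrightarrow> xs \<in> R r"
    using Aut_preserves[OF assms, of "map (inv g) xs" r] by simp
qed

lemma comp_in_Aut:
  assumes "g \<in> Aut ar R" "h \<in> Aut ar R"
  shows "g \<circ> h \<in> Aut ar R"
proof (rule AutI)
  show "bij (g \<circ> h)"
    using assms by (simp add: Aut_bij bij_comp)
  fix r and xs :: "'a list" assume "length xs = ar r"
  then show "map (g \<circ> h) xs \<in> R r \<longleftrightarrow> xs \<in> R r"
    using Aut_preserves[OF assms(1), of "map h xs" r] Aut_preserves[OF assms(2), of xs r] by simp
qed

lemma stab_antimono: "X \<subseteq> Y \<Longrightarrow> stab G Y \<subseteq> stab G X"
  by (auto simp: stab_def)

lemma acl_eq_mono: "X \<subseteq> Y \<Longrightarrow> acl_eq G X \<subseteq> acl_eq G Y"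
  by (auto simp: acl_eq_def)

lemma dcl_eq_mono: "X \<subseteq> Y \<Longrightarrow> dcl_eq G X \<subseteq> dcl_eq G Y"
  by (auto simp: dcl_eq_def)

lemma dcl_eq_subset_acl_eq: "dcl_eq G X \<subseteq> acl_eq G X"
  by (auto simp: dcl_eq_def acl_eq_def)

lemma stab_left_coset:
  assumes "g \<in> stab (Aut ar R) F" "c \<in> stab (Aut ar R) F" "act c e = act g e"
  shows "inv c \<circ> g \<in> stab (Aut ar R) {e}" and "c \<circ> (inv c \<circ> g) = g"
proof -
  have "c \<in> Aut ar R" "g \<in> Aut ar R"
    using assms by (auto simp: stab_def)
  then have "bij c" "inv c \<circ> g \<in> Aut ar R"
    by (auto intro: Aut_bij comp_in_Aut inv_in_Aut)
  moreover have "act (inv c \<circ> g) e = e"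
    using assms(3) \<open>bij c\<close> by (metis act_comp act_inv_act)
  ultimately show "inv c \<circ> g \<in> stab (Aut ar R) {e}"
    by (simp add: stab_def)
  have "c \<circ> inv c = id"
    using \<open>bij c\<close> by (meson bij_is_surj surj_iff)
  then show "c \<circ> (inv c \<circ> g) = g"
    by (simp add: o_assoc)
qed

text \<open>Choosing one representative c y of each left coset of the stabiliser of e, the
  stab F-orbit of x is covered by the finitely many translates c y \<cdot> (stab e-orbit of x).\<close>

lemma finite_orbit_trans:
  assumes fin_e: "finite ((\<lambda>g. act g e) ` stab (Aut ar R) F)"
    and fin_x: "finite ((\<lambda>g. act g x) ` stab (Aut ar R) {e})"
  shows "finite ((\<lambda>g. act g x) ` stab (Aut ar R) F)"
proof -
  let ?G = "Aut ar R"
  define c where "c y = (SOME h. h \<in> stab ?G F \<and> act h e = y)" for y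
  have c: "c (act g e) \<in> stab ?G F \<and> act (c (act g e)) e = act g e" if "g \<in> stab ?G F" for g
    unfolding c_def by (rule someI_ex[of "\<lambda>h. h \<in> stab ?G F \<and> act h e = act g e"]) (use that in blast)
  have "(\<lambda>g. act g x) ` stab ?G F
          \<subseteq> (\<Union>y\<in>(\<lambda>g. act g e) ` stab ?G F. act (c y) ` (\<lambda>h. act h x) ` stab ?G {e})"
  proof (rule image_subsetI)
    fix g assume g: "g \<in> stab ?G F"
    with c have "c (act g e) \<in> stab ?G F" "act (c (act g e)) e = act g e"
      by blast+
    note coset = stab_left_coset[OF g this]
    then have "act g x = act (c (act g e)) (act (inv (c (act g e)) \<circ> g) x)"
      by (metis act_comp)
    with coset(1) g show "act g x \<in> (\<Union>y\<in>(\<lambda>g. act g e) ` stab ?G F.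
        act (c y) ` (\<lambda>h. act h x) ` stab ?G {e})"
      by blast
  qed
  moreover have "finite (\<Union>y\<in>(\<lambda>g. act g e) ` stab ?G F. act (c y) ` (\<lambda>h. act h x) ` stab ?G {e})"
    using fin_e finite_imageI[OF fin_x] by (rule finite_UN_I)
  ultimately show ?thesis
    by (rule finite_subset)
qed

lemma acl_eq_trans:
  assumes "e \<in> acl_eq (Aut ar R) X" "x \<in> acl_eq (Aut ar R) {e}"
  shows "x \<in> acl_eq (Aut ar R) X"
proof -
  obtain F where F: "F \<subseteq> X" "finite F" "finite ((\<lambda>g. act g e) ` stab (Aut ar R) F)"
    using assms(1) by (auto simp: acl_eq_def)
  obtain F' where "F' \<subseteq> {e}" "finite ((\<lambda>g. act g x) ` stab (Aut ar R) F')"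
    using assms(2) by (auto simp: acl_eq_def)
  then have "finite ((\<lambda>g. act g x) ` stab (Aut ar R) {e})"
    by (meson finite_subset image_mono stab_antimono)
  with F(3) have "finite ((\<lambda>g. act g x) ` stab (Aut ar R) F)"
    by (rule finite_orbit_trans)
  with F(1,2) assms(2) show ?thesis
    by (auto simp: acl_eq_def)
qed

lemma real_el_in_acl_eqD:
  assumes "no_algebraicity G" "real_el a \<in> acl_eq G (real_el ` A)"
  shows "a \<in> A"
proof -
  obtain F where "F \<subseteq> real_el ` A" "finite F" "finite ((\<lambda>g. act g (real_el a)) ` stab G F)"
    using assms(2) by (auto simp: acl_eq_def)
  moreover obtain A' where "A' \<subseteq> A" "finite A'" "F = real_el ` A'"
    using \<open>F \<subseteq> real_el ` A\<close> \<open>finite F\<close> by (meson finite_subset_image)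
  ultimately have "finite (real_el ` (\<lambda>g. g a) ` stab G (real_el ` A'))"
    by (simp add: act_real_el image_image)
  then have "finite ((\<lambda>g. g a) ` stab G (real_el ` A'))"
    using inj_real_el by (metis finite_imageD inj_on_subset subset_UNIV)
  with assms(1) \<open>finite A'\<close> have "a \<in> A'"
    unfolding no_algebraicity_def by blast
  with \<open>A' \<subseteq> A\<close> show "a \<in> A" by blast
qed

theorem mainTheorem3:
  fixes ar :: "'r \<Rightarrow> nat" and R :: "'r \<Rightarrow> ('a::countable) list set"
  assumes "oligomorphic (Aut ar R)"
    and "no_algebraicity (Aut ar R)"
    and "weak_EI (Aut ar R)"
  shows "\<forall>A B :: 'a set. acl_eq (Aut ar R) (real_el ` A) \<inter> acl_eq (Aut ar R) (real_el ` B)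
           = dcl_eq (Aut ar R) (real_el ` (A \<inter> B))"
proof (intro allI equalityI)
  fix A B :: "'a set"
  let ?acl = "\<lambda>C. acl_eq (Aut ar R) (real_el ` C)"
  show "?acl A \<inter> ?acl B \<subseteq> dcl_eq (Aut ar R) (real_el ` (A \<inter> B))"
  proof
    fix e assume e: "e \<in> ?acl A \<inter> ?acl B"
    then have "e \<in> Meq (Aut ar R)"
      by (simp add: acl_eq_def)
    with assms(3) obtain as where e_dcl: "e \<in> dcl_eq (Aut ar R) (real_el ` set as)"
      and code_algebraic: "real_el ` set as \<subseteq> acl_eq (Aut ar R) {e}"
      unfolding weak_EI_def by blast
    have "a \<in> C" if "a \<in> set as" "e \<in> ?acl C" for a C
      using real_el_in_acl_eqD[OF assms(2) acl_eq_trans] code_algebraic that by blast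
    with e have "set as \<subseteq> A \<inter> B"
      by blast
    with e_dcl show "e \<in> dcl_eq (Aut ar R) (real_el ` (A \<inter> B))"
      by (meson dcl_eq_mono image_mono subsetD)
  qed
  have "?acl (A \<inter> B) \<subseteq> ?acl A \<inter> ?acl B"
    by (simp add: acl_eq_mono image_mono)
  with dcl_eq_subset_acl_eq show "dcl_eq (Aut ar R) (real_el ` (A \<inter> B)) \<subseteq> ?acl A \<inter> ?acl B"
    by (rule subset_trans)
qed

end
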